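(* Let $X$ be a real Banach lattice and let $A \subseteq X$ be a solid set. Then an element $a \in A$ is an extreme point of $A$ if and only if $|a|$ is an order extreme point of $A$.
   Context: A set $C\subseteq X$ is solid if whenever $x\in X$, $z\in C$ and $|x|\le |z|$, then $x\in C$. For $A \subseteq X$, a point $a\in A$ is an order extreme point of $A$ if for all $x_0,x_1\in A$ and $t\in(0,1)$, the inequality $a\le (1-t)x_0+tx_1$ implies $x_0=a=x_1$. Extreme points are meant in the usual (convexity) sense. *)

theory Defs
  imports "HOL-Analysis.Analysis" "HOL-Library.Lattice_Algebras"
begin

class banach_lattice = banach + ordered_real_vector + lattice_ab_group_add_abs +
  assumes lattice_norm: "\<bar>x\<bar> \<le> \<bar>y\<bar> \<Longrightarrow> norm x \<le> norm y"

definition solid :: "'a::banach_lattice set \<Rightarrow> bool" where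
  "solid C \<longleftrightarrow> (\<forall>x z. z \<in> C \<and> \<bar>x\<bar> \<le> \<bar>z\<bar> \<longrightarrow> x \<in> C)"

definition order_extreme_point :: "'a::banach_lattice \<Rightarrow> 'a set \<Rightarrow> bool" where
  "order_extreme_point a A \<longleftrightarrow> a \<in> A \<and>
     (\<forall>x0\<in>A. \<forall>x1\<in>A. \<forall>t::real. 0 < t \<and> t < 1 \<and>
        a \<le> (1 - t) *\<^sub>R x0 + t *\<^sub>R x1 \<longrightarrow> x0 = a \<and> x1 = a)"

end

theory Submission imports Defs begin

text \<open>
  Backward direction: if \<open>a\<close> lies strictly between \<open>x\<^sub>0\<close> and \<open>x\<^sub>1\<close>, then
  \<open>\<bar>a\<bar> \<le> (1 - t) \<bar>x\<^sub>0\<bar> + t \<bar>x\<^sub>1\<bar>\<close>, so order extremality forces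
  \<open>\<bar>x\<^sub>0\<bar> = \<bar>x\<^sub>1\<bar> = \<bar>a\<bar>\<close>; for \<open>d = x\<^sub>0 - x\<^sub>1\<close> and small \<open>s > 0\<close> both \<open>a \<plusminus> s d\<close> are
  convex combinations of \<open>a\<close> and some \<open>x\<^sub>i\<close>, whence
  \<open>\<bar>a\<bar> + \<bar>s d\<bar> = sup \<bar>a + s d\<bar> \<bar>a - s d\<bar> \<le> \<bar>a\<bar>\<close> and \<open>d = 0\<close>.

  Forward direction: if \<open>\<bar>a\<bar> \<le> (1 - t) x\<^sub>0 + t x\<^sub>1\<close>, the Riesz decomposition splits
  \<open>a = (1 - t) y\<^sub>0 + t y\<^sub>1\<close> with \<open>\<bar>y\<^sub>i\<bar> \<le> \<bar>x\<^sub>i\<bar>\<close>, so \<open>y\<^sub>i \<in> A\<close> by solidity and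
  extremality gives \<open>y\<^sub>0 = y\<^sub>1 = a\<close>. Hence \<open>\<bar>a\<bar> \<le> \<bar>x\<^sub>i\<bar>\<close>, and an extreme point \<open>a\<close>
  of a solid set admits no \<open>p \<in> A\<close> with \<open>\<bar>a\<bar> < p\<close> (else \<open>a\<close> would be the midpoint of
  \<open>a \<plusminus> (p - \<bar>a\<bar>)\<close>), so \<open>\<bar>x\<^sub>i\<bar> = \<bar>a\<bar>\<close>. Finally
  \<open>\<bar>a\<bar> \<le> (1 - t) x\<^sub>0 + t x\<^sub>1 \<le> (1 - t) \<bar>x\<^sub>0\<bar> + t \<bar>x\<^sub>1\<bar> = \<bar>a\<bar>\<close> forces \<open>x\<^sub>i = \<bar>x\<^sub>i\<bar>\<close>.
\<close>

lemma abs_scaleR_le: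
  fixes x :: "'a::{ordered_real_vector, lattice_ab_group_add_abs}"
  assumes "0 \<le> c"
  shows "\<bar>c *\<^sub>R x\<bar> \<le> c *\<^sub>R \<bar>x\<bar>"
proof (rule abs_leI)
  show "c *\<^sub>R x \<le> c *\<^sub>R \<bar>x\<bar>" using assms by (intro scaleR_left_mono abs_ge_self)
  have "c *\<^sub>R (-x) \<le> c *\<^sub>R \<bar>x\<bar>" using assms by (intro scaleR_left_mono abs_ge_minus_self)
  then show "- (c *\<^sub>R x) \<le> c *\<^sub>R \<bar>x\<bar>" by simp
qed

lemma abs_scaleR_add_le:
  fixes x y :: "'a::{ordered_real_vector, lattice_ab_group_add_abs}"
  assumes "0 \<le> c" "0 \<le> d"
  shows "\<bar>c *\<^sub>R x + d *\<^sub>R y\<bar> \<le> c *\<^sub>R \<bar>x\<bar> + d *\<^sub>R \<bar>y\<bar>"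
  by (meson abs_scaleR_le abs_triangle_ineq add_mono assms order_trans)

lemma sup_abs_add_abs_diff:
  fixes a e :: "'a::lattice_ab_group_add_abs"
  shows "sup \<bar>a + e\<bar> \<bar>a - e\<bar> = \<bar>a\<bar> + \<bar>e\<bar>"
proof -
  have "\<bar>a\<bar> + \<bar>e\<bar> = sup (a + sup e (-e)) (-a + sup e (-e))"
    unfolding abs_lattice[of a] abs_lattice[of e] by (rule add_sup_distrib_right)
  also have "\<dots> = sup (sup (a + e) (a + - e)) (sup (-a + e) (-a + - e))"
    by (simp only: add_sup_distrib_left)
  also have "\<dots> = sup (sup (a + e) (- (a + e))) (sup (a - e) (- (a - e)))"
  proof -
    have "-(a + e) = -a + -e" "a - e = a + -e" "-(a - e) = -a + e"
      by (simp_all add: algebra_simps)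
    then show ?thesis by (simp only:) (simp only: sup_aci)
  qed
  finally show ?thesis unfolding abs_lattice[of "a + e"] abs_lattice[of "a - e"] by simp
qed

text \<open>The witness is \<open>a\<close> truncated to the order interval \<open>[-P, P]\<close>.\<close>

lemma riesz_decomposition:
  fixes a P Q :: "'a::lattice_ab_group_add_abs"
  assumes P: "0 \<le> P" and Q: "0 \<le> Q" and aPQ: "\<bar>a\<bar> \<le> P + Q"
  obtains b c where "a = b + c" "\<bar>b\<bar> \<le> P" "\<bar>c\<bar> \<le> Q"
proof -
  define X where "X = sup a (-P)"
  define b where "b = inf X P"
  have "-P \<le> P" using P by (meson neg_le_0_iff_le order_trans)
  then have "-P \<le> b" unfolding b_def X_def by (simp add: le_infI)
  moreover have "b \<le> P" unfolding b_def by simp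
  ultimately have b_bound: "\<bar>b\<bar> \<le> P" by (intro abs_leI) (auto simp: minus_le_iff)
  have a_le: "a \<le> P + Q" using aPQ abs_ge_self order_trans by blast
  have minus_a_le: "-a \<le> P + Q" using aPQ abs_ge_minus_self order_trans by blast
  have lower: "a - Q \<le> b" unfolding b_def X_def
  proof (rule le_infI)
    show "a - Q \<le> sup a (- P)" using Q by (meson diff_le_eq le_add_same_cancel1 order_trans sup_ge1)
    show "a - Q \<le> P" using a_le by (simp add: diff_le_eq)
  qed
  have "X + P = sup (a + P) (-P + P)" unfolding X_def by (rule add_sup_distrib_right)
  also have "\<dots> \<le> a + Q + P"
  proof (rule le_supI)
    show "a + P \<le> a + Q + P" using Q by simp
    have "-a + a \<le> P + Q + a" using minus_a_le by (rule add_right_mono)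
    then show "-P + P \<le> a + Q + P" by (simp add: add_ac)
  qed
  also have "\<dots> \<le> a + Q + sup X P" by (simp add: add_left_mono)
  finally have "X + P \<le> a + Q + sup X P" .
  moreover have "b + sup X P = X + P" unfolding b_def using add_eq_inf_sup[of X P] by (simp only: add.commute)
  ultimately have "b + sup X P \<le> a + Q + sup X P" by simp
  then have upper: "b \<le> a + Q" by (rule add_le_imp_le_right)
  have "\<bar>a - b\<bar> \<le> Q"
  proof (rule abs_leI)
    show "a - b \<le> Q" using lower by (metis add.commute diff_le_eq le_diff_eq)
    have "b - a \<le> Q" using upper by (metis add.commute diff_le_eq)
    then show "- (a - b) \<le> Q" by simp
  qed
  with b_bound show thesis by (intro that[of b "a - b"]) simp_all
qed

lemma convex_comb_le_imp_eq:
  fixes x0 x1 y0 y1 :: "'a::ordered_real_vector"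
  assumes "x0 \<le> y0" "x1 \<le> y1" "0 < t" "t < 1"
    and le: "(1 - t) *\<^sub>R y0 + t *\<^sub>R y1 \<le> (1 - t) *\<^sub>R x0 + t *\<^sub>R x1"
  shows "x0 = y0" "x1 = y1"
proof -
  define u0 where "u0 = (1 - t) *\<^sub>R (y0 - x0)"
  define u1 where "u1 = t *\<^sub>R (y1 - x1)"
  have "0 \<le> u0" "0 \<le> u1" unfolding u0_def u1_def using assms by (simp_all add: scaleR_nonneg_nonneg)
  moreover have "u0 + u1 \<le> 0" unfolding u0_def u1_def using le by (simp add: algebra_simps)
  ultimately have "u0 + u1 = 0" by (intro antisym add_nonneg_nonneg)
  with \<open>0 \<le> u0\<close> \<open>0 \<le> u1\<close> have "u0 = 0" "u1 = 0" by (simp_all add: add_nonneg_eq_0_iff)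
  then show "x0 = y0" "x1 = y1" unfolding u0_def u1_def using assms by simp_all
qed

lemma abs_convex_comb_le_abs:
  fixes a x :: "'a::{ordered_real_vector, lattice_ab_group_add_abs}"
  assumes "\<bar>x\<bar> \<le> \<bar>a\<bar>" "0 \<le> c" "c \<le> 1"
  shows "\<bar>a + c *\<^sub>R (x - a)\<bar> \<le> \<bar>a\<bar>"
proof -
  have "\<bar>a + c *\<^sub>R (x - a)\<bar> = \<bar>(1 - c) *\<^sub>R a + c *\<^sub>R x\<bar>" by (simp add: algebra_simps)
  also have "\<dots> \<le> (1 - c) *\<^sub>R \<bar>a\<bar> + c *\<^sub>R \<bar>x\<bar>" using assms by (intro abs_scaleR_add_le) auto
  also have "\<dots> \<le> (1 - c) *\<^sub>R \<bar>a\<bar> + c *\<^sub>R \<bar>a\<bar>" using assms by (intro add_left_mono scaleR_left_mono)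
  finally show ?thesis by (simp add: algebra_simps)
qed

lemma abs_le_not_in_open_segment:
  fixes a x0 x1 :: "'a::{ordered_real_vector, lattice_ab_group_add_abs}"
  assumes x0: "\<bar>x0\<bar> \<le> \<bar>a\<bar>" and x1: "\<bar>x1\<bar> \<le> \<bar>a\<bar>"
  shows "a \<notin> open_segment x0 x1"
proof
  assume "a \<in> open_segment x0 x1"
  then obtain u where ne: "x0 \<noteq> x1" and u: "0 < u" "u < 1"
    and a: "a = (1 - u) *\<^sub>R x0 + u *\<^sub>R x1"
    by (auto simp: in_segment)
  define d where "d = x0 - x1"
  define s where "s = min u (1 - u)"
  have s: "0 < s" "s \<le> u" "s \<le> 1 - u" using u by (auto simp: s_def)
  have "a + s *\<^sub>R d = a + (s / u) *\<^sub>R (x0 - a)"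
    using u by (simp add: a d_def algebra_simps)
  also have "\<bar>\<dots>\<bar> \<le> \<bar>a\<bar>" using s u x0 by (intro abs_convex_comb_le_abs) auto
  finally have plus: "\<bar>a + s *\<^sub>R d\<bar> \<le> \<bar>a\<bar>" .
  have "x1 - a = - ((1 - u) *\<^sub>R d)" by (simp add: a d_def algebra_simps)
  then have "a - s *\<^sub>R d = a + (s / (1 - u)) *\<^sub>R (x1 - a)" using u by simp
  also have "\<bar>\<dots>\<bar> \<le> \<bar>a\<bar>" using s u x1 by (intro abs_convex_comb_le_abs) auto
  finally have minus: "\<bar>a - s *\<^sub>R d\<bar> \<le> \<bar>a\<bar>" .
  have "\<bar>a\<bar> + \<bar>s *\<^sub>R d\<bar> \<le> \<bar>a\<bar>"
    unfolding sup_abs_add_abs_diff[symmetric] using plus minus by (rule le_supI)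
  then have "s *\<^sub>R d = 0" by simp
  with s ne show False by (simp add: d_def)
qed

lemma solidD: "solid A \<Longrightarrow> z \<in> A \<Longrightarrow> \<bar>x\<bar> \<le> \<bar>z\<bar> \<Longrightarrow> x \<in> A"
  unfolding solid_def by blast

lemma extreme_point_of_solid_abs_maximal:
  fixes A :: "'a::banach_lattice set"
  assumes sol: "solid A" and ext: "a extreme_point_of A" and p: "p \<in> A" "\<bar>a\<bar> \<le> p"
  shows "p = \<bar>a\<bar>"
proof (rule ccontr)
  assume "p \<noteq> \<bar>a\<bar>"
  define d where "d = p - \<bar>a\<bar>"
  have "d \<noteq> 0" "0 \<le> d" "0 \<le> p" using p \<open>p \<noteq> \<bar>a\<bar>\<close> order_trans[OF abs_ge_zero] by (auto simp: d_def)
  then have "\<bar>a + d\<bar> \<le> \<bar>p\<bar>" "\<bar>a - d\<bar> \<le> \<bar>p\<bar>"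
    using abs_triangle_ineq[of a d] abs_triangle_ineq4[of a d] by (simp_all add: d_def)
  then have "a + d \<in> A" "a - d \<in> A" using solidD[OF sol p(1)] by auto
  moreover have "a \<in> open_segment (a - d) (a + d)"
    using midpoint_in_open_segment[of "a - d" "a + d"] \<open>d \<noteq> 0\<close>
    by (simp add: midpoint_def neg_eq_iff_add_eq_0 scaleR_add_right[symmetric] flip: scaleR_2)
  ultimately show False using ext unfolding extreme_point_of_def by blast
qed

lemma extreme_point_of_solid_abs_le_of_convex:
  fixes A :: "'a::banach_lattice set"
  assumes sol: "solid A" and ext: "a extreme_point_of A" and x: "x0 \<in> A" "x1 \<in> A"
    and t: "0 < t" "t < 1" and le: "\<bar>a\<bar> \<le> (1 - t) *\<^sub>R \<bar>x0\<bar> + t *\<^sub>R \<bar>x1\<bar>"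
  shows "\<bar>a\<bar> \<le> \<bar>x0\<bar>" "\<bar>a\<bar> \<le> \<bar>x1\<bar>"
proof -
  obtain b c where a: "a = b + c"
    and b: "\<bar>b\<bar> \<le> (1 - t) *\<^sub>R \<bar>x0\<bar>" and c: "\<bar>c\<bar> \<le> t *\<^sub>R \<bar>x1\<bar>"
  proof (rule riesz_decomposition[OF _ _ le])
    show "0 \<le> (1 - t) *\<^sub>R \<bar>x0\<bar>" "0 \<le> t *\<^sub>R \<bar>x1\<bar>"
      using t by (simp_all add: scaleR_nonneg_nonneg)
  qed
  define y0 where "y0 = (1 / (1 - t)) *\<^sub>R b"
  define y1 where "y1 = (1 / t) *\<^sub>R c"
  have "\<bar>y0\<bar> \<le> (1 / (1 - t)) *\<^sub>R \<bar>b\<bar>" using t by (simp add: y0_def abs_scaleR_le)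
  also have "\<dots> \<le> \<bar>x0\<bar>" using t scaleR_left_mono[OF b, of "1 / (1 - t)"] by simp
  finally have y0: "\<bar>y0\<bar> \<le> \<bar>x0\<bar>" .
  have "\<bar>y1\<bar> \<le> (1 / t) *\<^sub>R \<bar>c\<bar>" using t by (simp add: y1_def abs_scaleR_le)
  also have "\<dots> \<le> \<bar>x1\<bar>" using t scaleR_left_mono[OF c, of "1 / t"] by simp
  finally have y1: "\<bar>y1\<bar> \<le> \<bar>x1\<bar>" .
  have a_comb: "a = (1 - t) *\<^sub>R y0 + t *\<^sub>R y1" using t by (simp add: a y0_def y1_def)
  have "y0 \<in> A" "y1 \<in> A" using solidD[OF sol] x y0 y1 by auto
  with ext have "a \<notin> open_segment y0 y1" by (simp add: extreme_point_of_def)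
  with t a_comb have "y0 = y1" by (auto simp: in_segment)
  with a_comb have "y0 = a" "y1 = a" by (simp_all add: algebra_simps)
  with y0 y1 show "\<bar>a\<bar> \<le> \<bar>x0\<bar>" "\<bar>a\<bar> \<le> \<bar>x1\<bar>" by simp_all
qed

theorem mainTheorem1:
  fixes A :: "'a::banach_lattice set" and a :: 'a
  assumes "solid A" and "a \<in> A"
  shows "a extreme_point_of A \<longleftrightarrow> order_extreme_point \<bar>a\<bar> A"
proof
  assume ext: "a extreme_point_of A"
  show "order_extreme_point \<bar>a\<bar> A" unfolding order_extreme_point_def
  proof (intro conjI ballI allI impI)
    show "\<bar>a\<bar> \<in> A" using solidD[OF assms] by simp
    fix x0 x1 and t :: real
    assume x: "x0 \<in> A" "x1 \<in> A" and "0 < t \<and> t < 1 \<and> \<bar>a\<bar> \<le> (1 - t) *\<^sub>R x0 + t *\<^sub>R x1"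
    then have t: "0 < t" "t < 1" and le: "\<bar>a\<bar> \<le> (1 - t) *\<^sub>R x0 + t *\<^sub>R x1" by auto
    have "(1 - t) *\<^sub>R x0 + t *\<^sub>R x1 \<le> (1 - t) *\<^sub>R \<bar>x0\<bar> + t *\<^sub>R \<bar>x1\<bar>"
      using t by (intro add_mono scaleR_left_mono abs_ge_self) auto
    with le have "\<bar>a\<bar> \<le> (1 - t) *\<^sub>R \<bar>x0\<bar> + t *\<^sub>R \<bar>x1\<bar>" by (rule order_trans)
    then have x_abs: "\<bar>x0\<bar> = \<bar>a\<bar>" "\<bar>x1\<bar> = \<bar>a\<bar>"
      using extreme_point_of_solid_abs_le_of_convex[OF assms(1) ext x t]
        extreme_point_of_solid_abs_maximal[OF assms(1) ext] solidD[OF assms(1)] x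
      by auto
    have "(1 - t) *\<^sub>R \<bar>x0\<bar> + t *\<^sub>R \<bar>x1\<bar> = \<bar>a\<bar>"
      unfolding x_abs by (simp flip: scaleR_add_left)
    with le have "(1 - t) *\<^sub>R \<bar>x0\<bar> + t *\<^sub>R \<bar>x1\<bar> \<le> (1 - t) *\<^sub>R x0 + t *\<^sub>R x1" by simp
    from convex_comb_le_imp_eq[OF abs_ge_self abs_ge_self t this] x_abs
    show "x0 = \<bar>a\<bar>" "x1 = \<bar>a\<bar>" by simp_all
  qed
next
  assume oe: "order_extreme_point \<bar>a\<bar> A"
  show "a extreme_point_of A" unfolding extreme_point_of_def
  proof (intro conjI ballI notI \<open>a \<in> A\<close>)
    fix x0 x1 assume x: "x0 \<in> A" "x1 \<in> A" and seg: "a \<in> open_segment x0 x1"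
    then obtain u where u: "0 < u" "u < 1" and "a = (1 - u) *\<^sub>R x0 + u *\<^sub>R x1"
      by (auto simp: in_segment)
    then have "\<bar>a\<bar> \<le> (1 - u) *\<^sub>R \<bar>x0\<bar> + u *\<^sub>R \<bar>x1\<bar>" by (simp add: abs_scaleR_add_le)
    moreover have "\<bar>x0\<bar> \<in> A" "\<bar>x1\<bar> \<in> A" using solidD[OF assms(1)] x by auto
    ultimately have "\<bar>x0\<bar> = \<bar>a\<bar>" "\<bar>x1\<bar> = \<bar>a\<bar>"
      using oe u unfolding order_extreme_point_def by blast+
    then show False using abs_le_not_in_open_segment[of x0 a x1] seg by simp
  qed
qed

end
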